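(* Let $f$ be a transcendental meromorphic function projectable via $\exp_1$. Then there is $\ell\in\mathbb{Z}$ such that $f(z+1)=f(z)+\ell$ for every $z\in\mathbb{C}$. Moreover, for every $n\in\mathbb{N}$ and $k\in\mathbb{Z}$, $f^n(z+k)=f^n(z)+\ell^nk$.
   Context: $\exp_1(z)=e^{2\pi iz}$. A transcendental meromorphic $f:\mathbb{C}\to\widehat{\mathbb{C}}$ is projectable via $\exp_1$ if there is a function $g$ with $g\circ\exp_1=\exp_1\circ f$ wherever defined. *)

theory Defs
  imports "HOL-Complex_Analysis.Complex_Analysis" "HOL-Computational_Algebra.Polynomial"
begin

definition exp1 :: "complex \<Rightarrow> complex" where
  "exp1 z = exp (2 * of_real pi * \<i> * z)"

text \<open>A meromorphic function on the whole plane, represented as a map complex to complex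
  whose poles are the points where it tends to infinity (value 0 there by convention).\<close>
definition rational_fun :: "(complex \<Rightarrow> complex) \<Rightarrow> bool" where
  "rational_fun f \<longleftrightarrow> (\<exists>p q :: complex poly. q \<noteq> 0 \<and>
      (\<forall>z. poly q z \<noteq> 0 \<longrightarrow> f z = poly p z / poly q z))"

definition transcendental_meromorphic :: "(complex \<Rightarrow> complex) \<Rightarrow> bool" where
  "transcendental_meromorphic f \<longleftrightarrow> f nicely_meromorphic_on UNIV \<and> \<not> rational_fun f"

definition projectable_exp1 :: "(complex \<Rightarrow> complex) \<Rightarrow> bool" where
  "projectable_exp1 f \<longleftrightarrow> (\<exists>g. \<forall>z. \<not> is_pole f z \<longrightarrow> g (exp1 z) = exp1 (f z))"

definition iter_defined :: "(complex \<Rightarrow> complex) \<Rightarrow> nat \<Rightarrow> complex \<Rightarrow> bool" where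
  "iter_defined f n z \<longleftrightarrow> (\<forall>j<n. \<not> is_pole f ((f ^^ j) z))"

end

theory Submission
  imports Defs
begin

(* Since exp1 has period 1, the projection identity gives exp1 (f (z + 1)) = exp1 (f z), so
   f (z + 1) - f z is an integer wherever f is finite at z and z + 1. This difference is continuous
   on the complement of the countably many poles and their translates, a connected set, hence it
   is a constant l. Near every point f (w + 1) = f w + l then holds off a discrete set, which forces
   the poles to be invariant under z \<mapsto> z + 1. Integer translations and iterates follow by
   induction, using f (z + k) = f z + l k to pass from f^(n+1) to f^n. *)

lemma exp1_add_1: "exp1 (z + 1) = exp1 z"
  by (simp add: exp1_def distrib_left exp_add)

lemma exp1_eq_imp_diff_Ints:
  assumes "exp1 a = exp1 b"
  shows "a - b \<in> \<int>"
proof -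
  obtain n :: int
    where "2 * of_real pi * \<i> * a = 2 * of_real pi * \<i> * b + (of_int (2 * n) * pi) * \<i>"
    using assms unfolding exp1_def exp_eq by blast
  then have "2 * of_real pi * \<i> * a = 2 * of_real pi * \<i> * (b + of_int n)"
    by (simp add: algebra_simps)
  then have "a = b + of_int n"
    by simp
  then show ?thesis
    by simp
qed

lemma eventually_at_shift:
  fixes z c :: "'a::real_normed_vector"
  assumes "eventually P (at (z + c))"
  shows "eventually (\<lambda>w. P (w + c)) (at z)"
proof -
  have "at (z + c) = filtermap (\<lambda>w. w + c) (at z)"
    using filtermap_at_shift[of "-c" z] by simp
  then show ?thesis
    using assms by (simp add: eventually_filtermap)
qed

lemma Ints_valued_continuous_on_constant:
  fixes h :: "'a::topological_space \<Rightarrow> complex"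
  assumes "connected S" "continuous_on S h" "\<And>z. z \<in> S \<Longrightarrow> h z \<in> \<int>"
  obtains n :: int where "\<And>z. z \<in> S \<Longrightarrow> h z = of_int n"
proof -
  have "h constant_on S"
  proof (rule continuous_discrete_range_constant[OF assms(1,2)])
    have "1 \<le> norm (h y - h x)" if xy: "x \<in> S" "y \<in> S" "h y \<noteq> h x" for x y
    proof -
      obtain m :: int where m: "h y - h x = of_int m"
        using xy(1,2) assms(3) by (metis Ints_cases Ints_diff)
      then have "m \<noteq> 0"
        using xy(3) by auto
      then show ?thesis
        using m by simp
    qed
    then show "\<exists>e>0. \<forall>y. y \<in> S \<and> h y \<noteq> h x \<longrightarrow> e \<le> norm (h y - h x)" if "x \<in> S" for x
      using that zero_less_one by blast
  qed
  then obtain c where c: "\<And>z. z \<in> S \<Longrightarrow> h z = c"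
    unfolding constant_on_def by blast
  show ?thesis
  proof (cases "S = {}")
    case False
    then obtain z0 where "z0 \<in> S" by blast
    then obtain n where "c = of_int n" using c assms(3) Ints_cases by metis
    then show ?thesis using c that by blast
  qed (use that in blast)
qed

lemma countable_poles_if_meromorphic_on_UNIV:
  assumes "f meromorphic_on UNIV"
  shows "countable {z. is_pole f z}"
proof -
  have "{z. is_pole f z} sparse_in UNIV"
    using meromorphic_on_imp_not_pole_cosparse[OF assms] by (simp add: eventually_cosparse)
  then show ?thesis
    using sparse_imp_countable[OF open_UNIV] by simp
qed

lemma connected_not_pole_and_shift:
  assumes "f meromorphic_on UNIV"
  shows "connected {z. \<not> is_pole f z \<and> \<not> is_pole f (z + c)}"
proof -
  define P where "P = {z. is_pole f z}"
  have "{z. \<not> is_pole f z \<and> \<not> is_pole f (z + c)} = UNIV - (P \<union> (\<lambda>z. z - c) ` P)"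
    unfolding P_def by (force simp: image_iff)
  moreover have "countable (P \<union> (\<lambda>z. z - c) ` P)"
    using countable_poles_if_meromorphic_on_UNIV[OF assms] unfolding P_def by simp
  ultimately show ?thesis
    by (auto intro: connected_open_diff_countable)
qed

lemma is_pole_shift_iff_if_eventually_shift:
  fixes f :: "'a::real_normed_vector \<Rightarrow> 'b::real_normed_vector"
  assumes "eventually (\<lambda>w. f (w + c) = f w + d) (at z)"
  shows "is_pole f (z + c) \<longleftrightarrow> is_pole f z"
proof -
  have "is_pole f (z + c) \<longleftrightarrow> is_pole (\<lambda>w. f (w + c)) z"
    using is_pole_shift_iff[of f c z] by (simp add: o_def add.commute)
  also have "\<dots> \<longleftrightarrow> is_pole (\<lambda>w. f w + d) z"
    using assms by (rule is_pole_cong) simp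
  also have "\<dots> \<longleftrightarrow> is_pole f z"
    by (rule is_pole_plus_const_iff[symmetric])
  finally show ?thesis .
qed

lemma projectable_exp1_shift_diff_Ints:
  assumes "projectable_exp1 f" "\<not> is_pole f z" "\<not> is_pole f (z + 1)"
  shows "f (z + 1) - f z \<in> \<int>"
proof -
  obtain g where g: "\<And>z. \<not> is_pole f z \<Longrightarrow> g (exp1 z) = exp1 (f z)"
    using assms(1) unfolding projectable_exp1_def by blast
  have "exp1 (f (z + 1)) = exp1 (f z)"
    using g[OF assms(2)] g[OF assms(3)] by (simp add: exp1_add_1)
  then show ?thesis
    by (rule exp1_eq_imp_diff_Ints)
qed

(* The terminology of circle dynamics: f lifts a circle map of degree l. *)
definition lift_of_degree :: "(complex \<Rightarrow> complex) \<Rightarrow> int \<Rightarrow> bool" where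
  "lift_of_degree f l \<longleftrightarrow>
     (\<forall>z. (is_pole f (z + 1) \<longleftrightarrow> is_pole f z) \<and>
          (\<not> is_pole f z \<longrightarrow> f (z + 1) = f z + of_int l))"

lemma projectable_exp1_imp_lift_of_degree:
  assumes mero: "f nicely_meromorphic_on UNIV" and proj: "projectable_exp1 f"
  obtains l where "lift_of_degree f l"
proof -
  define S where "S = {z. \<not> is_pole f z \<and> \<not> is_pole f (z + 1)}"
  have fm: "f meromorphic_on UNIV"
    using mero unfolding nicely_meromorphic_on_def by blast
  have cont: "isCont f z" if "\<not> is_pole f z" for z
    using nicely_meromorphic_on_imp_analytic_at[OF mero _ that] analytic_at_imp_isCont by blast
  have "continuous_on S (\<lambda>z. f (z + 1) - f z)"
  proof (intro continuous_at_imp_continuous_on ballI)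
    fix z assume "z \<in> S"
    then have "isCont f (z + 1)" "isCont f z"
      using cont unfolding S_def by auto
    then show "isCont (\<lambda>z. f (z + 1) - f z) z"
      by (intro continuous_intros isCont_o2[where f = "\<lambda>w. w + 1" and g = f]) auto
  qed
  then obtain l :: int where l: "\<And>z. z \<in> S \<Longrightarrow> f (z + 1) - f z = of_int l"
    using Ints_valued_continuous_on_constant connected_not_pole_and_shift[OF fm]
      projectable_exp1_shift_diff_Ints[OF proj] unfolding S_def by blast
  have not_pole: "eventually (\<lambda>w. \<not> is_pole f w) (at z)" for z
    using eventually_not_pole meromorphic_on_isolated_singularity meromorphic_on_subset[OF fm]
    by blast
  have pole_iff: "is_pole f (z + 1) \<longleftrightarrow> is_pole f z" for z
  proof (rule is_pole_shift_iff_if_eventually_shift)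
    show "eventually (\<lambda>w. f (w + 1) = f w + of_int l) (at z)"
      using not_pole[of z] eventually_at_shift[OF not_pole[of "z + 1"]]
      by eventually_elim (use l in \<open>auto simp: S_def algebra_simps\<close>)
  qed
  have "lift_of_degree f l"
    unfolding lift_of_degree_def using pole_iff l by (auto simp: S_def algebra_simps)
  then show ?thesis
    by (rule that)
qed

lemma lift_of_degree_is_pole_add_of_int:
  assumes "lift_of_degree f l"
  shows "is_pole f (z + of_int k) \<longleftrightarrow> is_pole f z"
proof (induction k rule: int_induct[where k = 0])
  case (step1 i)
  then show ?case
    using assms unfolding lift_of_degree_def by (metis add.assoc of_int_add of_int_1)
next
  case (step2 i)
  then show ?case
    using assms unfolding lift_of_degree_def
    by (metis diff_add_cancel add.assoc of_int_add of_int_1)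
qed simp

lemma lift_of_degree_add_of_int:
  assumes "lift_of_degree f l" "\<not> is_pole f z"
  shows "f (z + of_int k) = f z + of_int (l * k)"
proof (induction k rule: int_induct[where k = 0])
  case (step1 i)
  have "\<not> is_pole f (z + of_int i)"
    using lift_of_degree_is_pole_add_of_int[OF assms(1)] assms(2) by blast
  then have "f (z + of_int i + 1) = f (z + of_int i) + of_int l"
    using assms(1) unfolding lift_of_degree_def by blast
  then show ?case
    using step1 by (simp add: algebra_simps)
next
  case (step2 i)
  have "\<not> is_pole f (z + of_int (i - 1))"
    using lift_of_degree_is_pole_add_of_int[OF assms(1)] assms(2) by blast
  then have "f (z + of_int (i - 1) + 1) = f (z + of_int (i - 1)) + of_int l"
    using assms(1) unfolding lift_of_degree_def by blast
  then show ?case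
    using step2 by (simp add: algebra_simps)
qed simp

lemma iter_defined_Suc:
  "iter_defined f (Suc n) z \<longleftrightarrow> \<not> is_pole f z \<and> iter_defined f n (f z)"
  unfolding iter_defined_def
  by (auto simp: funpow_Suc_right less_Suc_eq_0_disj simp del: funpow.simps)

lemma lift_of_degree_iter_defined_add_of_int:
  assumes "lift_of_degree f l"
  shows "iter_defined f n (z + of_int k) \<longleftrightarrow> iter_defined f n z"
proof (induction n arbitrary: z k)
  case (Suc n)
  show ?case
  proof (cases "is_pole f z")
    case False
    then have "f (z + of_int k) = f z + of_int (l * k)"
      using lift_of_degree_add_of_int[OF assms] by blast
    then show ?thesis
      using Suc.IH[of "f z" "l * k"] lift_of_degree_is_pole_add_of_int[OF assms]
      by (simp add: iter_defined_Suc)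
  qed (simp add: iter_defined_Suc lift_of_degree_is_pole_add_of_int[OF assms])
qed (simp add: iter_defined_def)

lemma lift_of_degree_funpow_add_of_int:
  assumes "lift_of_degree f l" "iter_defined f n z"
  shows "(f ^^ n) (z + of_int k) = (f ^^ n) z + of_int l ^ n * of_int k"
  using assms(2)
proof (induction n arbitrary: z k)
  case (Suc n)
  then have "\<not> is_pole f z" "iter_defined f n (f z)"
    by (simp_all add: iter_defined_Suc)
  then have "(f ^^ Suc n) (z + of_int k) = (f ^^ n) (f z + of_int (l * k))"
    using lift_of_degree_add_of_int[OF assms(1)]
    by (simp add: funpow_Suc_right del: funpow.simps)
  also have "\<dots> = (f ^^ Suc n) z + of_int l ^ Suc n * of_int k"
    using Suc.IH[OF \<open>iter_defined f n (f z)\<close>, of "l * k"]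
    by (simp add: funpow_Suc_right algebra_simps del: funpow.simps)
  finally show ?case .
qed simp

theorem lemma2p1:
  fixes f :: "complex \<Rightarrow> complex"
  assumes "transcendental_meromorphic f" and "projectable_exp1 f"
  shows "\<exists>l::int.
     (\<forall>z. (is_pole f (z + 1) \<longleftrightarrow> is_pole f z) \<and>
          (\<not> is_pole f z \<longrightarrow> f (z + 1) = f z + of_int l)) \<and>
     (\<forall>(n::nat) (k::int) z.
          (iter_defined f n (z + of_int k) \<longleftrightarrow> iter_defined f n z) \<and>
          (iter_defined f n z \<longrightarrow>
             (f ^^ n) (z + of_int k) = (f ^^ n) z + of_int l ^ n * of_int k))"
proof -
  have "f nicely_meromorphic_on UNIV"
    using assms(1) unfolding transcendental_meromorphic_def by blast
  then obtain l where l: "lift_of_degree f l"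
    using projectable_exp1_imp_lift_of_degree assms(2) by blast
  then show ?thesis
    using lift_of_degree_iter_defined_add_of_int[OF l] lift_of_degree_funpow_add_of_int[OF l]
    unfolding lift_of_degree_def by blast
qed

end
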